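(* Let $S$ be an instance of 3-Partition (with $n_1\ge\cdots\ge n_{3m}$), let $\langle i_k\rangle_{k=1}^{3m}$ be non-negative integers with $i_{3j-2}+i_{3j-1}+i_{3j}=B$ for every $j\in\{1,\dots,m\}$, and let $W=\prod_{k=1}^{3m}(a_1b^{i_k}a_2)$. Suppose that $W\,\|\,\mathrm{Ver}_S\vdash^*\varepsilon\,\|\,\varepsilon$ via a computation satisfying the V-Condition (so that $\varepsilon\,\|\,w_S\vdash^*\varepsilon\,\|\,\varepsilon$ and $w_S$ is a square). Then $S$ is a "yes" instance of 3-Partition.
   Context: Queue automaton: a configuration is written $Q\,\|\,x$ ($Q$ = queue contents, $x$ = remaining input); a step from $Q\,\|\,\sigma x$ ($\sigma$ a symbol) goes either to $Q\sigma\,\|\,x$ (push the input symbol) or, if $Q=\sigma Q'$, to $Q'\,\|\,x$ (the input symbol is matched against the leftmost queue symbol, which is popped; that queue symbol was pushed from an earlier input position and the two occurrences are said to be matched). $\vdash^*$ is zero or more steps; $\varepsilon$ is the empty string. A string $w$ is a square if it is a shuffle of some string with itself. An instance of 3-Partition is a sequence $S=\langle n_i:1\le i\le 3m\rangle$ of natural numbers such that $B=(\sum_{i=1}^{3m}n_i)/m$ is an integer and $B/4<n_i<B/2$ for all $i$; it is a "yes" instance if it can be partitioned into $m$ disjoint subsequences each with exactly three elements summing to $B$. Throughout, the $n_i$ are in non-increasing order. Alphabet $\{a_1,a_2,b,e_0,e,c_1,c_2,x,y\}$; $u^i$ is $i$ copies of $u$ concatenated, $\prod_{\ell=1}^k u_\ell=u_1\cdots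 u_k$. Define $U_\ell=a_1^2b^\ell a_2^2$, $v_\ell=c_1x^\ell y^\ell c_2$, $D_k=U_{n_k}^{3m-k+1}$, $E_k=U_B^{3m-k}\,a_1b^{n_k}a_2\,U_B^{3m-k}$, $F_k=U_B^{2(3m-k)}$, $\mathrm{Load}_S=e_0\prod_{i=1}^m(b^{2B}e)$, $\mathrm{Dist}_S=e_0\prod_{i=1}^m((a_1b^Ba_2)^3e)$, $\mathrm{Ver}_S=\prod_{k=1}^{3m}[v_{4k-3}D_kv_{4k-3}\,v_{4k-2}D_kv_{4k-2}\,v_{4k-1}E_kv_{4k-1}\,v_{4k}F_kv_{4k}]$, $w_S=\mathrm{Load}_S\mathrm{Dist}_S\mathrm{Ver}_S$. Each $v_\ell$ ($1\le\ell\le 12m$) occurs exactly twice in $\mathrm{Ver}_S$. A computation satisfies the V-Condition if for each $\ell$ with $1\le\ell\le12m$ the symbols of the second occurrence of $v_\ell$ are all matched against the corresponding symbols of the first occurrence of $v_\ell$. *)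

theory Defs
  imports Main
begin

datatype sym = A1 | A2 | Bs | E0 | E | C1 | C2 | X | Y

(* queue automaton run, tracking matchings by input positions.
   Queue entries: (symbol, tag); tag = Some p if pushed from input position p (0-based),
   None if the symbol was in the initial queue.
   qrun w Q i M : from configuration  Q || drop i w  the automaton reaches  eps || eps,
   and M is the set of matchings (tag of popped queue symbol, input position) performed. *)
inductive qrun :: "sym list \<Rightarrow> (sym \<times> nat option) list \<Rightarrow> nat \<Rightarrow> (nat option \<times> nat) set \<Rightarrow> bool"
  for w :: "sym list" where
  fin: "qrun w [] (length w) {}"
| push: "i < length w \<Longrightarrow> qrun w (Q @ [(w ! i, Some i)]) (Suc i) M \<Longrightarrow> qrun w Q i M"
| pop: "i < length w \<Longrightarrow> qrun w Q (Suc i) M \<Longrightarrow> qrun w ((w ! i, t) # Q) i (insert (t, i) M)"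

(* 3-Partition; the sequence is ns with n_k = ns ! (k-1), k = 1..3m *)
definition is_3part_instance :: "nat list \<Rightarrow> nat \<Rightarrow> nat \<Rightarrow> bool" where
  "is_3part_instance ns m B \<longleftrightarrow> m > 0 \<and> length ns = 3 * m \<and> sum_list ns = m * B \<and>
     (\<forall>x\<in>set ns. B < 4 * x \<and> 2 * x < B)"

definition is_yes_3part :: "nat list \<Rightarrow> nat \<Rightarrow> nat \<Rightarrow> bool" where
  "is_yes_3part ns m B \<longleftrightarrow> (\<exists>f :: nat \<Rightarrow> nat. (\<forall>i<3*m. f i < m) \<and>
     (\<forall>j<m. card {i. i < 3*m \<and> f i = j} = 3 \<and> (\<Sum>i | i < 3*m \<and> f i = j. ns ! i) = B))"

definition nn :: "nat list \<Rightarrow> nat \<Rightarrow> nat" where "nn ns k = ns ! (k - 1)"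

definition pw :: "sym list \<Rightarrow> nat \<Rightarrow> sym list" where "pw u i = concat (replicate i u)"

definition U :: "nat \<Rightarrow> sym list" where "U l = [A1, A1] @ replicate l Bs @ [A2, A2]"
definition v :: "nat \<Rightarrow> sym list" where "v l = [C1] @ replicate l X @ replicate l Y @ [C2]"

definition Dw :: "nat list \<Rightarrow> nat \<Rightarrow> nat \<Rightarrow> sym list" where
  "Dw ns m k = pw (U (nn ns k)) (3*m - k + 1)"
definition Ew :: "nat list \<Rightarrow> nat \<Rightarrow> nat \<Rightarrow> nat \<Rightarrow> sym list" where
  "Ew ns m B k = pw (U B) (3*m - k) @ [A1] @ replicate (nn ns k) Bs @ [A2] @ pw (U B) (3*m - k)"
definition Fw :: "nat \<Rightarrow> nat \<Rightarrow> nat \<Rightarrow> sym list" where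
  "Fw m B k = pw (U B) (2 * (3*m - k))"

definition Ver :: "nat list \<Rightarrow> nat \<Rightarrow> nat \<Rightarrow> sym list" where
  "Ver ns m B = concat (map (\<lambda>k.
       v (4*k-3) @ Dw ns m k @ v (4*k-3) @ v (4*k-2) @ Dw ns m k @ v (4*k-2) @
       v (4*k-1) @ Ew ns m B k @ v (4*k-1) @ v (4*k) @ Fw m B k @ v (4*k)) [1..<3*m+1])"

(* the middle part between the two occurrences of v_l, l = 1..12m *)
definition mid :: "nat list \<Rightarrow> nat \<Rightarrow> nat \<Rightarrow> nat \<Rightarrow> sym list" where
  "mid ns m B l = (let k = (l + 3) div 4; r = (l - 1) mod 4 in
     if r = 0 \<or> r = 1 then Dw ns m k else if r = 2 then Ew ns m B k else Fw m B k)"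

definition blk :: "nat list \<Rightarrow> nat \<Rightarrow> nat \<Rightarrow> nat \<Rightarrow> sym list" where
  "blk ns m B l = v l @ mid ns m B l @ v l"

(* 0-based position in Ver of the first symbol of the first occurrence of v_l *)
definition voff :: "nat list \<Rightarrow> nat \<Rightarrow> nat \<Rightarrow> nat \<Rightarrow> nat" where
  "voff ns m B l = length (concat (map (blk ns m B) [1..<l]))"

definition V_condition :: "nat list \<Rightarrow> nat \<Rightarrow> nat \<Rightarrow> (nat option \<times> nat) set \<Rightarrow> bool" where
  "V_condition ns m B M \<longleftrightarrow> (\<forall>l. 1 \<le> l \<and> l \<le> 12*m \<longrightarrow>
     (\<forall>j < length (v l).
        (Some (voff ns m B l + j),
         voff ns m B l + length (v l) + length (mid ns m B l) + j) \<in> M))"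

definition Wq :: "nat \<Rightarrow> (nat \<Rightarrow> nat) \<Rightarrow> sym list" where
  "Wq m ik = concat (map (\<lambda>k. [A1] @ replicate (ik k) Bs @ [A2]) [1..<3*m+1])"

end

(*
  Look at the queue whenever the computation reaches a block v_l mid v_l of Ver_S. The
  V-condition says that the second copy of v_l pops precisely the symbols pushed by the first
  copy; hence the first copy pops nothing, mid pops the whole old queue, and the new queue
  consists of the symbols of mid that were pushed: mid is a shuffle of the old and the new
  queue.

  Words over a1 < b < a2 are compared by their number of descents, which cannot grow when
  passing to a subsequence. This makes the shuffle decompositions of the powers of U_c rigid:
  each factor a1^2 b^c a2^2 is split into a1^s b^k a2^t and its complement a1^(2-s) b^(c-k)
  a2^(2-t). Starting from the queue W = prod a1 b^(i_k) a2, round k therefore acts as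
  follows: the two D_k blocks force every factor a1 b^p a2 of the queue to satisfy p <= n_k
  and return the queue unchanged, and the E_k, F_k blocks delete one factor a1 b^(n_k) a2.
  So the multiset of the i_k is that of the n_k, and the hypothesis on the triples
  i_(3j-2) + i_(3j-1) + i_(3j) = B turns this into a 3-partition.
*)
theory Submission
  imports Defs "HOL-Library.Sublist" "HOL-Combinatorics.Permutations"
begin

section \<open>Shuffles\<close>

lemma shuffles_append_split:
  "zs \<in> shuffles xs ys \<Longrightarrow> zs = z1 @ z2 \<Longrightarrow>
   \<exists>x1 x2 y1 y2. xs = x1 @ x2 \<and> ys = y1 @ y2 \<and> z1 \<in> shuffles x1 y1 \<and> z2 \<in> shuffles x2 y2"
proof (induction z1 arbitrary: zs xs ys)
  case Nil
  then show ?case by (intro exI[of _ "[]"] exI[of _ xs] exI[of _ ys]) auto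
next
  case (Cons a z1)
  then have "a # (z1 @ z2) \<in> shuffles xs ys" by simp
  then consider (L) "xs \<noteq> []" "hd xs = a" "z1 @ z2 \<in> shuffles (tl xs) ys"
    | (R) "ys \<noteq> []" "hd ys = a" "z1 @ z2 \<in> shuffles xs (tl ys)"
    by (auto simp: Cons_in_shuffles_iff)
  then show ?case
  proof cases
    case L
    from Cons.IH[OF L(3) refl] obtain x1 x2 y1 y2 where
      h: "tl xs = x1 @ x2" "ys = y1 @ y2" "z1 \<in> shuffles x1 y1" "z2 \<in> shuffles x2 y2" by blast
    have "xs = a # tl xs" using L by (cases xs) auto
    then show ?thesis
      using h by (intro exI[of _ "a # x1"] exI[of _ x2] exI[of _ y1] exI[of _ y2])
        (auto intro: Cons_in_shuffles_leftI)
  next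
    case R
    from Cons.IH[OF R(3) refl] obtain x1 x2 y1 y2 where
      h: "xs = x1 @ x2" "tl ys = y1 @ y2" "z1 \<in> shuffles x1 y1" "z2 \<in> shuffles x2 y2" by blast
    have "ys = a # tl ys" using R by (cases ys) auto
    then show ?thesis
      using h by (intro exI[of _ x1] exI[of _ x2] exI[of _ "a # y1"] exI[of _ y2])
        (auto intro: Cons_in_shuffles_rightI)
  qed
qed

lemma subseq_of_shuffles: "zs \<in> shuffles xs ys \<Longrightarrow> subseq xs zs"
proof (induction zs arbitrary: xs ys)
  case (Cons z zs)
  then consider (L) "xs \<noteq> []" "hd xs = z" "zs \<in> shuffles (tl xs) ys"
    | (R) "ys \<noteq> []" "hd ys = z" "zs \<in> shuffles xs (tl ys)"
    by (auto simp: Cons_in_shuffles_iff)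
  then show ?case
    by cases (use Cons.IH in \<open>auto simp: neq_Nil_conv\<close>)
qed simp

lemma replicate_in_shufflesD:
  assumes "replicate n c \<in> shuffles xs ys"
  shows "\<exists>a b. xs = replicate a c \<and> ys = replicate b c \<and> a + b = n"
proof -
  have "set xs \<subseteq> {c}" "set ys \<subseteq> {c}" using set_shuffles[OF assms] by auto
  moreover have "length xs + length ys = n" using length_shuffles[OF assms] by simp
  ultimately show ?thesis by (metis replicate_length_same singletonD subset_eq)
qed

section \<open>Words \<open>a\<^sub>1\<^sup>s b\<^sup>k a\<^sub>2\<^sup>t\<close> and their descents\<close>

definition atom :: "nat \<times> nat \<times> nat \<Rightarrow> sym list" where
  "atom = (\<lambda>(s, k, t). replicate s A1 @ replicate k Bs @ replicate t A2)"

fun atom_compl :: "nat \<Rightarrow> nat \<times> nat \<times> nat \<Rightarrow> nat \<times> nat \<times> nat" where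
  "atom_compl c (s, k, t) = (2 - s, c - k, 2 - t)"

fun atom_bounded :: "nat \<Rightarrow> nat \<times> nat \<times> nat \<Rightarrow> bool" where
  "atom_bounded c (s, k, t) \<longleftrightarrow> s \<le> 2 \<and> k \<le> c \<and> t \<le> 2"

fun bracketed :: "nat \<times> nat \<times> nat \<Rightarrow> bool" where
  "bracketed (s, k, t) \<longleftrightarrow> 1 \<le> s \<and> 1 \<le> t"

lemma atom_compl_compl: "atom_bounded c x \<Longrightarrow> atom_compl c (atom_compl c x) = x"
  by (cases x) auto

lemma atom_in_shufflesD:
  assumes "atom (i, j, l) \<in> shuffles xs ys"
  shows "\<exists>s k t. s \<le> i \<and> k \<le> j \<and> t \<le> l \<and> xs = atom (s, k, t) \<and> ys = atom (i - s, j - k, l - t)"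
proof -
  obtain x1 x2 y1 y2 where 1: "xs = x1 @ x2" "ys = y1 @ y2" "replicate i A1 \<in> shuffles x1 y1"
      "replicate j Bs @ replicate l A2 \<in> shuffles x2 y2"
    using shuffles_append_split[OF assms[unfolded atom_def, simplified] refl] by blast
  obtain x3 x4 y3 y4 where 2: "x2 = x3 @ x4" "y2 = y3 @ y4" "replicate j Bs \<in> shuffles x3 y3"
      "replicate l A2 \<in> shuffles x4 y4"
    using shuffles_append_split[OF 1(4) refl] by blast
  obtain a1 b1 a2 b2 a3 b3 where
    "x1 = replicate a1 A1" "y1 = replicate b1 A1" "a1 + b1 = i"
    "x3 = replicate a2 Bs" "y3 = replicate b2 Bs" "a2 + b2 = j"
    "x4 = replicate a3 A2" "y4 = replicate b3 A2" "a3 + b3 = l"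
    using replicate_in_shufflesD[OF 1(3)] replicate_in_shufflesD[OF 2(3)]
      replicate_in_shufflesD[OF 2(4)] by metis
  then show ?thesis
    using 1 2 by (intro exI[of _ a1] exI[of _ a2] exI[of _ a3]) (auto simp: atom_def)
qed

lemma U_eq_atom: "U c = atom (2, c, 2)"
  by (simp add: U_def atom_def numeral_2_eq_2)

lemma pw_Suc: "pw u (Suc n) = u @ pw u n"
  by (simp add: pw_def)

lemma pw_0 [simp]: "pw u 0 = []"
  by (simp add: pw_def)

lemma pw_U_eq_concat_atoms: "pw (U c) N = concat (map atom (replicate N (2, c, 2)))"
  by (simp add: pw_def U_eq_atom map_replicate)

lemma pw_U_in_shufflesD:
  "pw (U c) N \<in> shuffles xs ys \<Longrightarrow>
   \<exists>as. length as = N \<and> xs = concat (map atom as) \<and> ys = concat (map (atom \<circ> atom_compl c) as)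
        \<and> (\<forall>x\<in>set as. atom_bounded c x)"
proof (induction N arbitrary: xs ys)
  case 0
  then show ?case by simp
next
  case (Suc N)
  then have "atom (2, c, 2) @ pw (U c) N \<in> shuffles xs ys" by (simp add: pw_Suc U_eq_atom)
  then obtain x1 x2 y1 y2 where h: "xs = x1 @ x2" "ys = y1 @ y2" "atom (2, c, 2) \<in> shuffles x1 y1"
      "pw (U c) N \<in> shuffles x2 y2"
    using shuffles_append_split[OF _ refl] by metis
  obtain as where "length as = N" "x2 = concat (map atom as)"
     "y2 = concat (map (atom \<circ> atom_compl c) as)" "\<forall>x\<in>set as. atom_bounded c x"
    using Suc.IH[OF h(4)] by blast
  moreover obtain s k t where "s \<le> 2" "k \<le> c" "t \<le> 2" "x1 = atom (s, k, t)"
      "y1 = atom (2 - s, c - k, 2 - t)"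
    using atom_in_shufflesD[OF h(3)] by blast
  ultimately show ?case
    using h by (intro exI[of _ "(s, k, t) # as"]) (simp add: comp_def)
qed

text \<open>Descents with respect to \<open>A1 < Bs < A2\<close>; the other symbols never occur in the words
  considered.\<close>

fun rank :: "sym \<Rightarrow> nat" where
  "rank A1 = 0" | "rank Bs = 1" | "rank A2 = 2" | "rank _ = 3"

fun descents :: "sym list \<Rightarrow> nat" where
  "descents (x # y # zs) = (if rank y < rank x then 1 else 0) + descents (y # zs)"
| "descents _ = 0"

lemma descents_Cons:
  "descents (x # xs) = (if xs \<noteq> [] \<and> rank (hd xs) < rank x then 1 else 0) + descents xs"
  by (cases xs) auto

lemma descents_append:
  "descents (xs @ ys) = descents xs + descents ys +
     (if xs \<noteq> [] \<and> ys \<noteq> [] \<and> rank (hd ys) < rank (last xs) then 1 else 0)"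
  by (induction xs) (auto simp: descents_Cons neq_Nil_conv)

lemma descents_mono_subseq: "subseq xs zs \<Longrightarrow> descents xs \<le> descents zs"
proof -
  have "list_emb (=) xs zs \<Longrightarrow> descents xs \<le> descents zs \<and> (\<forall>a. descents (a # xs) \<le> descents (a # zs))"
  proof (induction rule: list_emb.induct)
    case (list_emb_Cons xs ys y)
    have "descents (a # ys) \<le> descents (a # y # ys)" for a
      by (cases ys) (simp_all add: descents_Cons)
    moreover have "descents ys \<le> descents (y # ys)" by (simp add: descents_Cons)
    ultimately show ?case using list_emb_Cons.IH by (meson order_trans)
  qed (auto simp: descents_Cons)
  then show "subseq xs zs \<Longrightarrow> descents xs \<le> descents zs" by blast
qed

lemma descents_atom [simp]: "descents (atom x) = 0"
proof -
  have "sorted (map rank xs) \<Longrightarrow> descents xs = 0" for xs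
    by (induction xs rule: descents.induct) auto
  then show ?thesis by (cases x) (auto simp: atom_def sorted_append)
qed

lemma bracketed_atom:
  "bracketed x \<Longrightarrow> atom x \<noteq> [] \<and> hd (atom x) = A1 \<and> last (atom x) = A2"
  by (cases x) (auto simp: atom_def hd_append last_append)

lemma descents_concat_atoms_le: "descents (concat (map atom as)) \<le> length as - 1"
proof (induction as)
  case (Cons x as)
  then show ?case by (cases as) (auto simp: descents_append)
qed simp

lemma descents_append_bracketed_ge:
  "zs \<noteq> [] \<Longrightarrow> last zs = A2 \<Longrightarrow> \<forall>x\<in>set as. bracketed x \<Longrightarrow>
   descents zs + length as \<le> descents (zs @ concat (map atom as))"
proof (induction as arbitrary: zs)
  case (Cons x as)
  then have "descents (zs @ atom x) = descents zs + 1"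
    using bracketed_atom[of x] by (simp add: descents_append)
  moreover have "descents (zs @ atom x) + length as \<le> descents ((zs @ atom x) @ concat (map atom as))"
    using Cons bracketed_atom[of x] by (intro Cons.IH) auto
  ultimately show ?case by simp
qed simp

lemma descents_concat_bracketed:
  assumes "\<forall>x\<in>set as. bracketed x" "as \<noteq> []"
  shows "descents (concat (map atom as)) = length as - 1"
proof -
  obtain x as' where as: "as = x # as'" using assms(2) by (cases as) auto
  have "length as' \<le> descents (atom x @ concat (map atom as'))"
    using descents_append_bracketed_ge[of "atom x" as'] assms(1) bracketed_atom[of x] as by simp
  then show ?thesis using descents_concat_atoms_le[of as] as by simp
qed

lemma atom_inj: "atom x = atom y \<Longrightarrow> x = y"
proof -
  have "length (filter ((=) A1) (atom (s, k, t))) = s" "length (filter ((=) Bs) (atom (s, k, t))) = k"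
    "length (filter ((=) A2) (atom (s, k, t))) = t" for s k t
    by (auto simp: atom_def filter_replicate)
  then show "atom x = atom y \<Longrightarrow> x = y" by (cases x, cases y) metis
qed

lemma concat_atoms_eq_bracketed:
  assumes "\<forall>x\<in>set xs. bracketed x" "concat (map atom ys) = concat (map atom xs)"
    and "length ys = length xs"
  shows "ys = xs"
  using assms
proof (induction xs arbitrary: ys)
  case (Cons x xs)
  obtain y ys' where ys: "ys = y # ys'" using Cons.prems(3) by (cases ys) auto
  have x: "atom x \<noteq> []" "hd (atom x) = A1" "last (atom x) = A2"
    using bracketed_atom[of x] Cons.prems(1) by auto
  have "atom y @ concat (map atom ys') = atom x @ concat (map atom xs)"
    using Cons.prems(2) ys by simp
  then obtain us where split:
    "atom y = atom x @ us \<and> concat (map atom xs) = us @ concat (map atom ys')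
     \<or> atom y @ us = atom x \<and> concat (map atom ys') = us @ concat (map atom xs)"
    unfolding append_eq_append_conv2 by metis
  have no_overhang_right: False if us: "us \<noteq> []" "atom y = atom x @ us"
    "concat (map atom xs) = us @ concat (map atom ys')"
  proof -
    obtain x' xs' where xs: "xs = x' # xs'" using us by (cases xs) auto
    have "hd us = hd (us @ concat (map atom ys'))" using us(1) by simp
    also have "\<dots> = hd (atom x' @ concat (map atom xs'))" using us(3) xs by simp
    also have "\<dots> = A1" using bracketed_atom[of x'] Cons.prems(1) xs by simp
    finally have "hd us = A1" .
    then have "1 \<le> descents (atom x @ us)" using us(1) x by (simp add: descents_append)
    then show False using us(2) by (metis descents_atom not_one_le_zero)
  qed
  have no_overhang_left: False if "us \<noteq> []" "atom y @ us = atom x"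
    "concat (map atom ys') = us @ concat (map atom xs)"
  proof -
    have "last us = A2" using that x by (metis last_appendR)
    then have "length xs \<le> descents (concat (map atom ys'))"
      using descents_append_bracketed_ge[OF that(1)] Cons.prems(1) that(3) by fastforce
    moreover have "ys' \<noteq> []" using that by auto
    ultimately show False
      using descents_concat_atoms_le[of ys'] Cons.prems(3) ys by (cases ys') auto
  qed
  have "us = []" using split no_overhang_left no_overhang_right by blast
  then have "atom y = atom x" "concat (map atom ys') = concat (map atom xs)" using split by auto
  then show ?case using Cons ys atom_inj by simp
qed simp

section \<open>Queues of the form \<open>\<Prod> a\<^sub>1 b\<^sup>p a\<^sub>2\<close>\<close>

definition brick :: "nat \<Rightarrow> sym list" where
  "brick p = [A1] @ replicate p Bs @ [A2]"

definition bricks :: "nat list \<Rightarrow> sym list" where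
  "bricks ps = concat (map brick ps)"

lemma bricks_Nil [simp]: "bricks [] = []"
  and bricks_Cons [simp]: "bricks (p # ps) = brick p @ bricks ps"
  and bricks_append [simp]: "bricks (xs @ ys) = bricks xs @ bricks ys"
  by (simp_all add: bricks_def)

lemma brick_eq_atom: "brick p = atom (1, p, 1)"
  by (simp add: brick_def atom_def)

lemma bricks_eq_concat_atoms: "bricks ps = concat (map atom (map (\<lambda>p. (1, p, 1)) ps))"
  by (induction ps) (simp_all add: brick_eq_atom)

lemma bricks_eq_Nil_iff [simp]: "bricks ps = [] \<longleftrightarrow> ps = []"
  by (cases ps) (auto simp: brick_def)

lemma bricks_eq_ConsD: "bricks ps = a # zs \<Longrightarrow> a = A1"
  by (cases ps) (auto simp: brick_def)

lemma replicate_append_eq_prefix: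
  "replicate j c @ x = replicate q c @ y \<Longrightarrow> y = [] \<or> hd y \<noteq> c \<Longrightarrow> j \<le> q"
proof (induction j arbitrary: q)
  case (Suc j)
  then show ?case by (cases q) auto
qed simp

lemma replicate_append_eq_replicate_append:
  "replicate j c @ x = replicate q c @ y \<Longrightarrow> x = [] \<or> hd x \<noteq> c \<Longrightarrow> y = [] \<or> hd y \<noteq> c
   \<Longrightarrow> j = q \<and> x = y"
proof (induction j arbitrary: q)
  case 0
  then show ?case by (cases q) auto
next
  case (Suc j)
  then show ?case by (cases q) auto
qed

lemma prefix_of_brick:
  assumes "xs @ us = brick p"
  shows "xs = [] \<or> (\<exists>j\<le>p. xs = A1 # replicate j Bs \<and> us = replicate (p - j) Bs @ [A2])
    \<or> xs = brick p \<and> us = []"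
proof (cases xs)
  case (Cons x xs')
  then have x: "x = A1" and "xs' @ us = replicate p Bs @ [A2]" using assms by (auto simp: brick_def)
  then have "xs' = take (length xs') (replicate p Bs @ [A2])"
    "us = drop (length xs') (replicate p Bs @ [A2])"
    by (metis append_eq_conv_conj)+
  then show ?thesis
    using Cons x by (cases "length xs' \<le> p") (auto simp: brick_def)
qed simp

lemma bricks_append_split:
  "bricks ps = xs @ ys \<Longrightarrow>
   (\<exists>ps1 ps2. ps = ps1 @ ps2 \<and> xs = bricks ps1 \<and> ys = bricks ps2) \<or>
   (\<exists>ps1 q ps2 j. ps = ps1 @ q # ps2 \<and> j \<le> q \<and> xs = bricks ps1 @ A1 # replicate j Bs \<and>
       ys = replicate (q - j) Bs @ A2 # bricks ps2)"
proof (induction ps arbitrary: xs)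
  case (Cons p ps)
  then obtain us where "brick p = xs @ us \<and> us @ bricks ps = ys \<or> brick p @ us = xs \<and> bricks ps = us @ ys"
    unfolding bricks_Cons append_eq_append_conv2 by metis
  then show ?case
  proof
    assume h: "brick p = xs @ us \<and> us @ bricks ps = ys"
    from prefix_of_brick[OF h[THEN conjunct1, symmetric]] show ?thesis
    proof (elim disjE exE conjE)
      assume "xs = []"
      then show ?thesis using h by (intro disjI1 exI[of _ "[]"] exI[of _ "p # ps"]) auto
    next
      fix j assume "j \<le> p" "xs = A1 # replicate j Bs" "us = replicate (p - j) Bs @ [A2]"
      then show ?thesis using h
        by (intro disjI2 exI[of _ "[]"] exI[of _ p] exI[of _ ps] exI[of _ j]) auto
    next
      assume "xs = brick p" "us = []"
      then show ?thesis using h by (intro disjI1 exI[of _ "[p]"] exI[of _ ps]) auto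
    qed
  next
    assume h: "brick p @ us = xs \<and> bricks ps = us @ ys"
    from Cons.IH[OF h[THEN conjunct2]] show ?thesis
    proof (elim disjE exE conjE)
      fix ps1 ps2 assume "ps = ps1 @ ps2" "us = bricks ps1" "ys = bricks ps2"
      then show ?thesis using h by (intro disjI1 exI[of _ "p # ps1"] exI[of _ ps2]) auto
    next
      fix ps1 q ps2 j assume "ps = ps1 @ q # ps2" "j \<le> q" "us = bricks ps1 @ A1 # replicate j Bs"
        "ys = replicate (q - j) Bs @ A2 # bricks ps2"
      then show ?thesis using h
        by (intro disjI2 exI[of _ "p # ps1"] exI[of _ q] exI[of _ ps2] exI[of _ j]) auto
    qed
  qed
qed simp

lemma bricks_eq_brick_infix:
  assumes "bricks ps = xs @ brick n @ ys"
  shows "\<exists>ps1 ps2. ps = ps1 @ n # ps2 \<and> xs = bricks ps1 \<and> ys = bricks ps2"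
  using bricks_append_split[OF assms]
proof (elim disjE exE conjE)
  fix ps1 ps2 assume h: "ps = ps1 @ ps2" "xs = bricks ps1" "brick n @ ys = bricks ps2"
  then obtain q ps2' where ps2: "ps2 = q # ps2'" by (cases ps2) (auto simp: brick_def)
  then have "replicate n Bs @ A2 # ys = replicate q Bs @ A2 # bricks ps2'"
    using h by (simp add: brick_def)
  from replicate_append_eq_replicate_append[OF this] have "n = q" "ys = bricks ps2'" by auto
  then show ?thesis using h ps2 by auto
next
  fix ps1 q ps2 j assume "brick n @ ys = replicate (q - j) Bs @ A2 # bricks ps2"
  then show ?thesis by (cases "q - j") (auto simp: brick_def)
qed

lemma hd_bricks: "ps \<noteq> [] \<Longrightarrow> hd (bricks ps) = A1"
  by (cases ps) (auto simp: brick_def)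

lemma successively_bricks: "successively (\<lambda>x y. x = y \<longrightarrow> x = Bs) (bricks ps)"
proof (induction ps)
  case (Cons p ps)
  have "successively (\<lambda>x y. x = y \<longrightarrow> x = Bs) (brick p)"
    by (induction p) (auto simp: brick_def successively_append_iff successively_Cons)
  moreover have "last (brick p) = A2" by (simp add: brick_def)
  ultimately show ?case
    using Cons hd_bricks[of ps] by (auto simp: successively_append_iff)
qed simp

lemma atom_infix_bricks:
  assumes "bricks ps = xs @ atom (a, j, c) @ ys"
  shows "a \<le> 1 \<and> c \<le> 1"
proof -
  have "successively (\<lambda>x y. x = y \<longrightarrow> x = Bs) (atom (a, j, c))"
    using successively_bricks[of ps] unfolding assms successively_append_iff by blast
  then have succ: "successively (\<lambda>x y. x = y \<longrightarrow> x = Bs) (replicate a A1)"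
    "successively (\<lambda>x y. x = y \<longrightarrow> x = Bs) (replicate c A2)"
    by (simp_all add: atom_def successively_append_iff)
  have "a \<le> 1"
  proof (rule ccontr)
    assume "\<not> a \<le> 1"
    then obtain a' where "a = Suc (Suc a')" by (cases a; cases "a - 1") auto
    then show False using succ(1) by simp
  qed
  moreover have "c \<le> 1"
  proof (rule ccontr)
    assume "\<not> c \<le> 1"
    then have c: "c = (c - 2) + 2" by simp
    have "replicate c A2 = replicate (c - 2) A2 @ [A2, A2]"
      by (subst (1) c, subst replicate_add) (simp add: numeral_2_eq_2)
    then show False using succ(2) by (simp add: successively_append_iff)
  qed
  ultimately show ?thesis ..
qed

lemma bricks_run_after_A1_closes:
  assumes "bricks ps = xs @ [A2, A1] @ replicate n Bs @ ys" "\<forall>p\<in>set ps. p \<le> n"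
  shows "\<exists>ys'. ys = A2 # ys'"
proof -
  have "bricks ps = (xs @ [A2]) @ A1 # replicate n Bs @ ys" using assms(1) by simp
  from bricks_append_split[OF this] show ?thesis
proof (elim disjE exE conjE)
  fix ps1 ps2 assume h: "ps = ps1 @ ps2" "A1 # replicate n Bs @ ys = bricks ps2"
  then obtain q ps2' where ps2: "ps2 = q # ps2'" by (cases ps2) auto
  then have eq: "replicate n Bs @ ys = replicate q Bs @ A2 # bricks ps2'"
    using h by (simp add: brick_def)
  have "n \<le> q" using replicate_append_eq_prefix[OF eq] by simp
  moreover have "q \<le> n" using assms(2) h ps2 by simp
  ultimately show ?thesis using eq by simp
next
  fix ps1 q ps2 j assume "A1 # replicate n Bs @ ys = replicate (q - j) Bs @ A2 # bricks ps2"
  then show ?thesis by (cases "q - j") auto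
qed
qed

lemma bricks_run_before_A2_opens:
  assumes "bricks ps = xs @ replicate n Bs @ [A2, A1] @ ys" "\<forall>p\<in>set ps. p \<le> n" "0 < n"
  shows "\<exists>xs'. xs = xs' @ [A1]"
proof -
  have "bricks ps = xs @ replicate n Bs @ A2 # A1 # ys" using assms(1) by simp
  from bricks_append_split[OF this] show ?thesis
proof (elim disjE exE conjE)
  fix ps1 ps2 assume "replicate n Bs @ A2 # A1 # ys = bricks ps2"
  moreover obtain n' where "n = Suc n'" using assms(3) by (cases n) auto
  ultimately have "bricks ps2 = Bs # replicate n' Bs @ A2 # A1 # ys" by simp
  then show ?thesis using bricks_eq_ConsD by blast
next
  fix ps1 q ps2 j assume h: "ps = ps1 @ q # ps2" "j \<le> q" "xs = bricks ps1 @ A1 # replicate j Bs"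
    "replicate n Bs @ A2 # A1 # ys = replicate (q - j) Bs @ A2 # bricks ps2"
  then have "n = q - j" using replicate_append_eq_replicate_append[OF h(4)] by simp
  moreover have "q \<le> n" using assms(2) h by simp
  ultimately have "j = 0" using assms(3) by simp
  then show ?thesis using h by simp
qed
qed

lemma pw_U_in_shuffles_infix_bricks:
  assumes "pw (U c) r \<in> shuffles xs R" "bricks ps = ls @ xs @ rs"
  shows "\<exists>zs. length zs = r \<and> (\<forall>z\<in>set zs. bracketed z) \<and>
    xs = concat (map (atom \<circ> atom_compl c) zs) \<and> R = concat (map atom zs)"
proof -
  obtain as where as: "length as = r" "xs = concat (map atom as)"
    "R = concat (map (atom \<circ> atom_compl c) as)" "\<forall>x\<in>set as. atom_bounded c x"
    using pw_U_in_shufflesD[OF assms(1)] by blast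
  have "bracketed (atom_compl c x)" if x_in: "x \<in> set as" for x
  proof -
    obtain as1 as2 where "as = as1 @ x # as2" using split_list[OF x_in] by blast
    moreover obtain a j d where x: "x = (a, j, d)" by (cases x) blast
    ultimately have "xs = concat (map atom as1) @ atom (a, j, d) @ concat (map atom as2)"
      using as(2) by simp
    then have "bricks ps = (ls @ concat (map atom as1)) @ atom (a, j, d) @
        (concat (map atom as2) @ rs)"
      using assms(2) by simp
    from atom_infix_bricks[OF this] show ?thesis using x by auto
  qed
  moreover have "concat (map (atom \<circ> atom_compl c) (map (atom_compl c) as)) = concat (map atom as)"
    using as(4) by (induction as) (simp_all add: atom_compl_compl)
  ultimately show ?thesis
    using as by (intro exI[of _ "map (atom_compl c) as"]) auto
qed

lemma pw_U_in_shuffles_bracketedD: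
  assumes "pw (U c) (length zs) \<in> shuffles (concat (map atom zs)) S" "\<forall>z\<in>set zs. bracketed z"
  shows "S = concat (map (atom \<circ> atom_compl c) zs) \<and> (\<forall>z\<in>set zs. atom_bounded c z)"
proof -
  obtain as where as: "length as = length zs" "concat (map atom zs) = concat (map atom as)"
    "S = concat (map (atom \<circ> atom_compl c) as)" "\<forall>x\<in>set as. atom_bounded c x"
    using pw_U_in_shufflesD[OF assms(1)] by blast
  have "as = zs" using concat_atoms_eq_bracketed[OF assms(2) as(2)[symmetric] as(1)] .
  then show ?thesis using as by simp
qed

lemma pw_U_in_shuffles_bricks:
  assumes "pw (U n) (length ps) \<in> shuffles (bricks ps) S"
  shows "(\<forall>p\<in>set ps. p \<le> n) \<and> S = bricks (map (\<lambda>p. n - p) ps)"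
proof -
  have "S = concat (map (atom \<circ> atom_compl n) (map (\<lambda>p. (1, p, 1)) ps)) \<and>
    (\<forall>z\<in>set (map (\<lambda>p. (1, p, 1)) ps). atom_bounded n z)"
    using assms by (intro pw_U_in_shuffles_bracketedD) (simp_all add: bricks_eq_concat_atoms)
  then show ?thesis by (simp add: bricks_eq_concat_atoms comp_def)
qed

section \<open>The blocks \<open>E\<^sub>k\<close> and \<open>F\<^sub>k\<close> delete one factor of the queue\<close>

lemma concat_bracketed_atoms:
  assumes "zs \<noteq> []" "\<forall>z\<in>set zs. bracketed z"
  shows "concat (map atom zs) \<noteq> [] \<and> hd (concat (map atom zs)) = A1 \<and> last (concat (map atom zs)) = A2"
proof -
  obtain z zs' where zs: "zs = z # zs'" using assms(1) by (cases zs) auto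
  obtain zs'' z' where zs2: "zs = zs'' @ [z']" using assms(1) by (cases zs rule: rev_cases) auto
  have "hd (concat (map atom zs)) = A1"
    using bracketed_atom[of z] assms(2) zs by simp
  moreover have "concat (map atom zs) \<noteq> [] \<and> last (concat (map atom zs)) = A2"
    using bracketed_atom[of z'] assms(2) zs2 by simp
  ultimately show ?thesis by simp
qed

lemma descents_around_atom:
  assumes "R1 \<noteq> []" "last R1 = A2" "R3 \<noteq> []" "hd R3 = A1" "s \<le> 1" "t \<le> 1"
    and "descents (R1 @ atom (s, k, t) @ R3) < descents R1 + descents R3 + 2"
  shows "k = 0 \<and> s + t \<le> 1"
proof (rule ccontr)
  assume "\<not> (k = 0 \<and> s + t \<le> 1)"
  then have "atom (s, k, t) \<noteq> []" "rank (hd (atom (s, k, t) @ R3)) < 2" "0 < rank (last (atom (s, k, t)))"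
    using assms(5,6) by (auto simp: atom_def hd_append last_append)
  then show False
    using assms by (simp add: descents_append)
qed

lemma pw_U_in_shuffles_absorb_A2:
  assumes "pw (U c) (length (zs1 @ z # zs2)) \<in>
      shuffles (concat (map atom (zs1 @ [z])) @ A2 # concat (map atom zs2)) S"
    and "\<forall>x\<in>set (zs1 @ z # zs2). bracketed x"
  shows "\<exists>S1. concat (map (atom \<circ> atom_compl c) (zs1 @ [z])) = S1 @ [A2] \<and>
    S = S1 @ concat (map (atom \<circ> atom_compl c) zs2)"
proof -
  obtain a j d where z: "z = (a, j, d)" by (cases z) blast
  have "atom (a, j, Suc d) = atom z @ [A2]" by (simp add: z atom_def replicate_append_same)
  then have "pw (U c) (length (zs1 @ (a, j, Suc d) # zs2)) \<in>
      shuffles (concat (map atom (zs1 @ (a, j, Suc d) # zs2))) S"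
    using assms(1) by simp
  from pw_U_in_shuffles_bracketedD[OF this] have
    S: "S = concat (map (atom \<circ> atom_compl c) zs1) @ atom (atom_compl c (a, j, Suc d)) @
      concat (map (atom \<circ> atom_compl c) zs2)" and "Suc d \<le> 2"
    using assms(2) z by auto
  then have "2 - d = Suc (2 - Suc d)" by simp
  then have "atom (atom_compl c z) = atom (atom_compl c (a, j, Suc d)) @ [A2]"
    by (simp add: z atom_def replicate_append_same del: diff_Suc_Suc)
  then show ?thesis using S by auto
qed

lemma pw_U_in_shuffles_absorb_A1:
  assumes "pw (U c) (length (zs1 @ z # zs2)) \<in>
      shuffles (concat (map atom zs1) @ A1 # concat (map atom (z # zs2))) S"
    and "\<forall>x\<in>set (zs1 @ z # zs2). bracketed x"
  shows "\<exists>S2. concat (map (atom \<circ> atom_compl c) (z # zs2)) = A1 # S2 \<and>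
    S = concat (map (atom \<circ> atom_compl c) zs1) @ S2"
proof -
  obtain a j d where z: "z = (a, j, d)" by (cases z) blast
  have "atom (Suc a, j, d) = A1 # atom z" by (simp add: z atom_def)
  then have "pw (U c) (length (zs1 @ (Suc a, j, d) # zs2)) \<in>
      shuffles (concat (map atom (zs1 @ (Suc a, j, d) # zs2))) S"
    using assms(1) by simp
  from pw_U_in_shuffles_bracketedD[OF this] have
    S: "S = concat (map (atom \<circ> atom_compl c) zs1) @ atom (atom_compl c (Suc a, j, d)) @
      concat (map (atom \<circ> atom_compl c) zs2)" and "Suc a \<le> 2"
    using assms(2) z by auto
  then have "2 - a = Suc (2 - Suc a)" by simp
  then have "atom (atom_compl c z) = A1 # atom (atom_compl c (Suc a, j, d))"
    by (simp add: z atom_def del: diff_Suc_Suc)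
  then show ?thesis using S by auto
qed

lemma E_block_split:
  assumes "pw (U c) r @ brick n @ pw (U c) r \<in> shuffles (bricks ps) R"
  obtains zs1 zs3 s k t where "length zs1 = r" "length zs3 = r"
    "\<forall>z\<in>set (zs1 @ zs3). bracketed z" "s \<le> 1" "k \<le> n" "t \<le> 1"
    "bricks ps = concat (map (atom \<circ> atom_compl c) zs1) @ atom (s, k, t) @
      concat (map (atom \<circ> atom_compl c) zs3)"
    "R = concat (map atom zs1) @ atom (1 - s, n - k, 1 - t) @ concat (map atom zs3)"
proof -
  obtain P1 P23 R1 R23 where 1: "bricks ps = P1 @ P23" "R = R1 @ R23"
    "pw (U c) r \<in> shuffles P1 R1" "brick n @ pw (U c) r \<in> shuffles P23 R23"
    using shuffles_append_split[OF assms refl] by metis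
  obtain P2 P3 R2 R3 where 2: "P23 = P2 @ P3" "R23 = R2 @ R3"
    "atom (1, n, 1) \<in> shuffles P2 R2" "pw (U c) r \<in> shuffles P3 R3"
    using shuffles_append_split[OF 1(4) refl] unfolding brick_eq_atom by metis
  obtain s k t where mid: "s \<le> 1" "k \<le> n" "t \<le> 1" "P2 = atom (s, k, t)"
    "R2 = atom (1 - s, n - k, 1 - t)"
    using atom_in_shufflesD[OF 2(3)] by blast
  obtain zs1 where left: "length zs1 = r" "\<forall>z\<in>set zs1. bracketed z"
    "P1 = concat (map (atom \<circ> atom_compl c) zs1)" "R1 = concat (map atom zs1)"
    using pw_U_in_shuffles_infix_bricks[OF 1(3), of ps "[]"] 1 2 by auto
  obtain zs3 where right: "length zs3 = r" "\<forall>z\<in>set zs3. bracketed z"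
    "P3 = concat (map (atom \<circ> atom_compl c) zs3)" "R3 = concat (map atom zs3)"
    using pw_U_in_shuffles_infix_bricks[OF 2(4), of ps "P1 @ P2" "[]"] 1 2 by auto
  show thesis
    by (rule that[of zs1 zs3 s k t]) (use 1 2 mid left right in auto)
qed

lemma descents_le_of_pw_U_in_shuffles:
  "pw (U c) N \<in> shuffles R S \<Longrightarrow> descents R \<le> N - 1"
  using descents_mono_subseq[OF subseq_of_shuffles] descents_concat_atoms_le[of "replicate N (2, c, 2)"]
  by (fastforce simp: pw_U_eq_concat_atoms)

lemma E_leftover_is_one_bracket:
  assumes zs: "zs1 \<noteq> []" "zs3 \<noteq> []" "\<forall>z\<in>set (zs1 @ zs3). bracketed z"
    and skt: "s \<le> 1" "k \<le> n" "t \<le> 1"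
    and F: "pw (U c) (length zs1 + length zs3) \<in>
      shuffles (concat (map atom zs1) @ atom (1 - s, n - k, 1 - t) @ concat (map atom zs3)) S"
  shows "k = n \<and> 1 \<le> s + t"
proof -
  have R1: "concat (map atom zs1) \<noteq> []" "last (concat (map atom zs1)) = A2"
    and R3: "concat (map atom zs3) \<noteq> []" "hd (concat (map atom zs3)) = A1"
    using concat_bracketed_atoms[of zs1] concat_bracketed_atoms[of zs3] zs by auto
  have "descents (concat (map atom zs1) @ atom (1 - s, n - k, 1 - t) @ concat (map atom zs3))
      \<le> length zs1 + length zs3 - 1"
    using descents_le_of_pw_U_in_shuffles[OF F] .
  also have "\<dots> < descents (concat (map atom zs1)) + descents (concat (map atom zs3)) + 2"
    using descents_concat_bracketed[of zs1] descents_concat_bracketed[of zs3] zs by auto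
  finally have "n - k = 0 \<and> (1 - s) + (1 - t) \<le> 1"
    using descents_around_atom[OF R1 R3, of "1 - s" "1 - t" "n - k"] by simp
  then show ?thesis using skt by auto
qed

lemma cut_brick_from_A2_leftover:
  assumes small: "\<forall>p\<in>set ps. p \<le> n" and zs: "zs1 \<noteq> []" "\<forall>z\<in>set (zs1 @ zs3). bracketed z"
    and P: "bricks ps = concat (map (atom \<circ> atom_compl c) zs1) @ A1 # replicate n Bs @
      concat (map (atom \<circ> atom_compl c) zs3)"
    and F: "pw (U c) (length zs1 + length zs3) \<in>
      shuffles (concat (map atom zs1) @ A2 # concat (map atom zs3)) S"
  shows "\<exists>xs ys. bricks ps = xs @ brick n @ ys \<and> S = xs @ ys"
proof -
  obtain zs1' z where zs1: "zs1 = zs1' @ [z]" using zs(1) by (cases zs1 rule: rev_cases) auto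
  then have "pw (U c) (length (zs1' @ z # zs3)) \<in>
      shuffles (concat (map atom (zs1' @ [z])) @ A2 # concat (map atom zs3)) S"
    using F by simp
  from pw_U_in_shuffles_absorb_A2[OF this] obtain S1 where
    S1: "concat (map (atom \<circ> atom_compl c) zs1) = S1 @ [A2]"
      "S = S1 @ concat (map (atom \<circ> atom_compl c) zs3)"
    using zs(2) zs1 by auto
  then have "bricks ps = S1 @ [A2, A1] @ replicate n Bs @ concat (map (atom \<circ> atom_compl c) zs3)"
    using P by simp
  from bricks_run_after_A1_closes[OF this small] obtain ys where
    "concat (map (atom \<circ> atom_compl c) zs3) = A2 # ys" ..
  then show ?thesis
    using P S1 by (intro exI[of _ "S1 @ [A2]"] exI[of _ ys]) (simp add: brick_def)
qed

lemma cut_brick_from_A1_leftover: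
  assumes small: "\<forall>p\<in>set ps. p \<le> n" "0 < n" and zs: "zs3 \<noteq> []" "\<forall>z\<in>set (zs1 @ zs3). bracketed z"
    and P: "bricks ps = concat (map (atom \<circ> atom_compl c) zs1) @ replicate n Bs @ A2 #
      concat (map (atom \<circ> atom_compl c) zs3)"
    and F: "pw (U c) (length zs1 + length zs3) \<in>
      shuffles (concat (map atom zs1) @ A1 # concat (map atom zs3)) S"
  shows "\<exists>xs ys. bricks ps = xs @ brick n @ ys \<and> S = xs @ ys"
proof -
  obtain z zs3' where zs3: "zs3 = z # zs3'" using zs(1) by (cases zs3) auto
  then have "pw (U c) (length (zs1 @ z # zs3')) \<in>
      shuffles (concat (map atom zs1) @ A1 # concat (map atom (z # zs3'))) S"
    using F by simp
  from pw_U_in_shuffles_absorb_A1[OF this] obtain S3 where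
    S3: "concat (map (atom \<circ> atom_compl c) zs3) = A1 # S3"
      "S = concat (map (atom \<circ> atom_compl c) zs1) @ S3"
    using zs(2) zs3 by auto
  then have "bricks ps = concat (map (atom \<circ> atom_compl c) zs1) @ replicate n Bs @ [A2, A1] @ S3"
    using P by simp
  from bricks_run_before_A2_opens[OF this small] obtain xs where
    "concat (map (atom \<circ> atom_compl c) zs1) = xs @ [A1]" ..
  then show ?thesis
    using P S3 by (intro exI[of _ xs] exI[of _ "A1 # S3"]) (simp add: brick_def)
qed

lemma E_F_blocks_cut_brick:
  assumes n: "0 < n" "\<forall>p\<in>set ps. p \<le> n"
    and E: "pw (U c) r @ brick n @ pw (U c) r \<in> shuffles (bricks ps) R"
    and F: "pw (U c) (2 * r) \<in> shuffles R S"
  shows "\<exists>xs ys. bricks ps = xs @ brick n @ ys \<and> S = xs @ ys"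
proof -
  obtain zs1 zs3 s k t where len: "length zs1 = r" "length zs3 = r"
    and br: "\<forall>z\<in>set (zs1 @ zs3). bracketed z" and skt: "s \<le> 1" "k \<le> n" "t \<le> 1"
    and P: "bricks ps = concat (map (atom \<circ> atom_compl c) zs1) @ atom (s, k, t) @
      concat (map (atom \<circ> atom_compl c) zs3)"
    and R: "R = concat (map atom zs1) @ atom (1 - s, n - k, 1 - t) @ concat (map atom zs3)"
    using E_block_split[OF E] by blast
  have F': "pw (U c) (length zs1 + length zs3) \<in> shuffles R S" using F len by (simp add: mult_2)
  show ?thesis
  proof (cases "r = 0")
    case True
    then have "R = []" "S = []" using F by simp_all
    moreover from \<open>R = []\<close> have "s = 1" "k = n" "t = 1" using R skt by (auto simp: atom_def)
    ultimately show ?thesis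
      using P True len by (intro exI[of _ "[]"] exI[of _ "[]"]) (simp add: brick_eq_atom)
  next
    case False
    then have zs: "zs1 \<noteq> []" "zs3 \<noteq> []" using len by auto
    have "k = n" "1 \<le> s + t" using E_leftover_is_one_bracket[OF zs br skt F'[unfolded R]] by auto
    then consider "s = 1" "t = 1" | "s = 1" "t = 0" | "s = 0" "t = 1" using skt by linarith
    then show ?thesis
    proof cases
      case 1
      then have "R = concat (map atom (zs1 @ zs3))" using R \<open>k = n\<close> by (simp add: atom_def)
      then show ?thesis
        using pw_U_in_shuffles_bracketedD[of c "zs1 @ zs3" S] F' br P 1 \<open>k = n\<close>
        by (intro exI[of _ "concat (map (atom \<circ> atom_compl c) zs1)"]
            exI[of _ "concat (map (atom \<circ> atom_compl c) zs3)"]) (simp add: brick_eq_atom)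
    next
      case 2
      then have "atom (1 - s, n - k, 1 - t) = [A2]" "atom (s, k, t) = A1 # replicate n Bs"
        using \<open>k = n\<close> by (simp_all add: atom_def)
      then show ?thesis
        using P F' R by (intro cut_brick_from_A2_leftover[OF n(2) zs(1) br]) simp_all
    next
      case 3
      then have "atom (1 - s, n - k, 1 - t) = [A1]" "atom (s, k, t) = replicate n Bs @ [A2]"
        using \<open>k = n\<close> by (simp_all add: atom_def)
      then show ?thesis
        using P F' R by (intro cut_brick_from_A1_leftover[OF n(2,1) zs(2) br]) simp_all
    qed
  qed
qed

section \<open>Partial computations of the queue automaton\<close>

text \<open>\<open>qsteps w Q i Q' j M\<close>: the computation leads from \<open>Q || drop i w\<close> to
  \<open>Q' || drop j w\<close>, performing the matchings \<open>M\<close>.\<close>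

inductive qsteps :: "sym list \<Rightarrow> (sym \<times> nat option) list \<Rightarrow> nat \<Rightarrow> (sym \<times> nat option) list \<Rightarrow> nat
    \<Rightarrow> (nat option \<times> nat) set \<Rightarrow> bool" for w :: "sym list" where
  stay: "qsteps w Q i Q i {}"
| push_step: "i < length w \<Longrightarrow> qsteps w (Q @ [(w ! i, Some i)]) (Suc i) Q' j M \<Longrightarrow> qsteps w Q i Q' j M"
| pop_step: "i < length w \<Longrightarrow> qsteps w Q (Suc i) Q' j M \<Longrightarrow>
    qsteps w ((w ! i, t) # Q) i Q' j (insert (t, i) M)"

definition pushed :: "sym list \<Rightarrow> nat \<Rightarrow> sym \<times> nat option" where
  "pushed w p = (w ! p, Some p)"

lemma qsteps_le: "qsteps w Q i Q' j M \<Longrightarrow> i \<le> j \<and> (i < j \<longrightarrow> j \<le> length w)"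
  by (induction rule: qsteps.induct) auto

lemma qsteps_match_pos: "qsteps w Q i Q' j M \<Longrightarrow> (t, q) \<in> M \<Longrightarrow> i \<le> q \<and> q < j"
proof (induction rule: qsteps.induct)
  case (pop_step i Q Q' j M t')
  then show ?case using qsteps_le[OF pop_step.hyps(2)] by auto
qed auto

lemma qrun_match_pos: "qrun w Q i M \<Longrightarrow> (t, q) \<in> M \<Longrightarrow> i \<le> q"
  by (induction rule: qrun.induct) auto

lemma qrun_split_union:
  "qrun w Q i M \<Longrightarrow> i \<le> j \<Longrightarrow> j \<le> length w \<Longrightarrow>
   \<exists>Q' M1 M2. qsteps w Q i Q' j M1 \<and> qrun w Q' j M2 \<and> M = M1 \<union> M2"
proof (induction arbitrary: j rule: qrun.induct)
  case fin
  then show ?case by (intro exI[of _ "[]"] exI[of _ "{}"]) (auto intro: qsteps.stay qrun.fin)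
next
  case (push i Q M)
  show ?case
  proof (cases "j = i")
    case True
    then show ?thesis
      using qrun.push[OF push.hyps] by (intro exI[of _ Q] exI[of _ "{}"] exI[of _ M]) (auto intro: qsteps.stay)
  next
    case False
    then obtain Q' M1 M2 where "qsteps w (Q @ [(w ! i, Some i)]) (Suc i) Q' j M1" "qrun w Q' j M2" "M = M1 \<union> M2"
      using push.IH[of j] push.prems by auto
    then show ?thesis using qsteps.push_step[OF push.hyps(1)] by blast
  qed
next
  case (pop i Q M t)
  show ?case
  proof (cases "j = i")
    case True
    then show ?thesis using qrun.pop[OF pop.hyps, of t]
      by (intro exI[of _ "(w ! i, t) # Q"] exI[of _ "{}"] exI[of _ "insert (t, i) M"]) (auto intro: qsteps.stay)
  next
    case False
    then obtain Q' M1 M2 where "qsteps w Q (Suc i) Q' j M1" "qrun w Q' j M2" "M = M1 \<union> M2"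
      using pop.IH[of j] pop.prems by auto
    then show ?thesis using qsteps.pop_step[OF pop.hyps(1)]
      by (intro exI[of _ Q'] exI[of _ "insert (t, i) M1"] exI[of _ M2]) auto
  qed
qed

lemma qrun_split:
  assumes "qrun w Q i M" "i \<le> j" "j \<le> length w"
  shows "\<exists>Q'. qsteps w Q i Q' j {x \<in> M. snd x < j} \<and> qrun w Q' j {x \<in> M. j \<le> snd x}"
proof -
  obtain Q' M1 M2 where run: "qsteps w Q i Q' j M1" "qrun w Q' j M2" "M = M1 \<union> M2"
    using qrun_split_union[OF assms] by blast
  have "\<forall>x\<in>M1. snd x < j" "\<forall>x\<in>M2. j \<le> snd x"
    using qsteps_match_pos[OF run(1)] qrun_match_pos[OF run(2)] by auto
  then have "M1 = {x \<in> M. snd x < j}" "M2 = {x \<in> M. j \<le> snd x}"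
    using run(3) by auto
  then show ?thesis using run(1,2) by auto
qed

lemma drop_take_Suc_Cons:
  "i < j \<Longrightarrow> j \<le> length w \<Longrightarrow> drop i (take j w) = w ! i # drop (Suc i) (take j w)"
proof -
  assume "i < j" "j \<le> length w"
  then have "i < length (take j w)" by simp
  then have "drop i (take j w) = take j w ! i # drop (Suc i) (take j w)"
    by (rule Cons_nth_drop_Suc[symmetric])
  then show ?thesis using \<open>i < j\<close> by simp
qed

lemma qsteps_shuffle:
  "qsteps w Q i Q' j M \<Longrightarrow> \<exists>d P. set P \<subseteq> {i..<j} \<and>
     Q' = drop d (Q @ map (pushed w) P) \<and> d + length P = j - i \<and> d \<le> length Q + length P \<and>
     drop i (take j w) \<in> shuffles (map fst (take d (Q @ map (pushed w) P))) (map ((!) w) P)"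
proof (induction rule: qsteps.induct)
  case (stay Q i)
  then show ?case by (intro exI[of _ 0] exI[of _ "[]"]) auto
next
  case (push_step i Q Q' j M)
  obtain d P where h: "set P \<subseteq> {Suc i..<j}"
     "Q' = drop d ((Q @ [(w ! i, Some i)]) @ map (pushed w) P)" "d + length P = j - Suc i"
     "d \<le> length (Q @ [(w ! i, Some i)]) + length P"
     "drop (Suc i) (take j w) \<in>
        shuffles (map fst (take d ((Q @ [(w ! i, Some i)]) @ map (pushed w) P))) (map ((!) w) P)"
    using push_step.IH by blast
  have ij: "Suc i \<le> j" "j \<le> length w" using qsteps_le[OF push_step.hyps(2)] push_step.hyps(1) by auto
  have Qi: "Q @ map (pushed w) (i # P) = (Q @ [(w ! i, Some i)]) @ map (pushed w) P"
    by (simp add: pushed_def)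
  show ?case
    using h ij drop_take_Suc_Cons[of i j w] unfolding Qi[symmetric]
    by (intro exI[of _ d] exI[of _ "i # P"]) (auto intro: Cons_in_shuffles_rightI)
next
  case (pop_step i Q Q' j M t)
  obtain d P where h: "set P \<subseteq> {Suc i..<j}"
     "Q' = drop d (Q @ map (pushed w) P)" "d + length P = j - Suc i" "d \<le> length Q + length P"
     "drop (Suc i) (take j w) \<in> shuffles (map fst (take d (Q @ map (pushed w) P))) (map ((!) w) P)"
    using pop_step.IH by blast
  have ij: "Suc i \<le> j" "j \<le> length w" using qsteps_le[OF pop_step.hyps(2)] pop_step.hyps(1) by auto
  show ?case
    using h ij drop_take_Suc_Cons[of i j w]
    by (intro exI[of _ "Suc d"] exI[of _ P]) (auto intro: Cons_in_shuffles_leftI)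
qed

lemma qsteps_all_pops:
  "qsteps w Q i Q' j M \<Longrightarrow> \<forall>k<j - i. (tt k, i + k) \<in> M \<Longrightarrow>
   j - i \<le> length Q \<and> (\<forall>k<j - i. snd (Q ! k) = tt k) \<and> Q' = drop (j - i) Q"
proof (induction arbitrary: tt rule: qsteps.induct)
  case (push_step i Q Q' j M)
  have "0 < j - i" using qsteps_le[OF push_step.hyps(2)] by simp
  then have "(tt 0, i + 0) \<in> M" using push_step.prems by blast
  then show ?case using qsteps_match_pos[OF push_step.hyps(2)] by fastforce
next
  case (pop_step i Q Q' j M t)
  have ij: "Suc i \<le> j" using qsteps_le[OF pop_step.hyps(2)] by simp
  have "(tt 0, i + 0) \<in> insert (t, i) M" using ij pop_step.prems by (meson zero_less_diff Suc_le_lessD)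
  then have t0: "tt 0 = t" using qsteps_match_pos[OF pop_step.hyps(2)] by fastforce
  have "\<forall>k<j - Suc i. (tt (Suc k), Suc i + k) \<in> M"
  proof (intro allI impI)
    fix k assume "k < j - Suc i"
    then have "Suc k < j - i" by simp
    then have "(tt (Suc k), i + Suc k) \<in> insert (t, i) M" using pop_step.prems by blast
    then show "(tt (Suc k), Suc i + k) \<in> M" by simp
  qed
  from pop_step.IH[OF this] have IH: "j - Suc i \<le> length Q" "\<forall>k<j - Suc i. snd (Q ! k) = tt (Suc k)"
     "Q' = drop (j - Suc i) Q" by auto
  have "\<forall>k<j - i. snd (((w ! i, t) # Q) ! k) = tt k"
    using IH(2) t0 by (auto simp: nth_Cons split: nat.split)
  moreover have "j - i = Suc (j - Suc i)" using ij by simp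
  ultimately show ?case using IH by simp
qed simp

definition tags_before :: "('a \<times> nat option) list \<Rightarrow> nat \<Rightarrow> bool" where
  "tags_before Q s \<longleftrightarrow> (\<forall>x\<in>set Q. \<forall>p. snd x = Some p \<longrightarrow> p < s)"

text \<open>The second copy of \<open>v\<^sub>l\<close> pops entries tagged \<open>s, \<dots>, s + L - 1\<close>: they are neither
  old entries nor pushed during \<open>mid\<close>, so the first copy of \<open>v\<^sub>l\<close> popped nothing and
  \<open>mid\<close> popped exactly the old queue.\<close>

lemma popped_window_is_pushed_block:
  fixes Q A Bl :: "('a \<times> nat option) list"
  assumes Q1: "Q1 = drop dA (Q @ A)" "dA \<le> length Q + length A" "dA + length A = L"
    and Q2: "Q2 = drop dB (Q1 @ Bl)" "dB \<le> length Q1 + length Bl"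
    and window: "0 < L" "L \<le> length Q2" "\<forall>k<L. snd (Q2 ! k) = Some (s + k)"
    and old: "tags_before Q s" and new: "\<forall>x\<in>set Bl. \<exists>p. snd x = Some p \<and> s + L \<le> p"
  shows "dA = 0 \<and> dB = length Q"
proof -
  have Q2_nth: "Q2 ! k = (Q1 @ Bl) ! (dB + k)" for k
    unfolding Q2(1) by (rule nth_drop) (use Q2(2) in simp)
  have window_in_Q1: "dB + L \<le> length Q1"
  proof (rule ccontr)
    assume "\<not> dB + L \<le> length Q1"
    define k where "k = length Q1 - dB"
    then have k: "k < L" "length Q1 \<le> dB + k" using \<open>\<not> dB + L \<le> length Q1\<close> window(1) by auto
    then have "dB + k - length Q1 < length Bl" using window(2) Q2 by simp
    then have "Q2 ! k \<in> set Bl" using k(2) by (simp add: Q2_nth nth_append)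
    then obtain p where "snd (Q2 ! k) = Some p" "s + L \<le> p" using new by blast
    then show False using window(3) k(1) by simp
  qed
  have "length Q \<le> dA + dB"
  proof (rule ccontr)
    assume short: "\<not> length Q \<le> dA + dB"
    have "Q2 ! 0 = Q1 ! dB" using window_in_Q1 window(1) by (simp add: Q2_nth nth_append)
    also have "\<dots> = (Q @ A) ! (dA + dB)" unfolding Q1(1) by (rule nth_drop) (use Q1(2) in simp)
    also have "\<dots> = Q ! (dA + dB)" using short by (simp add: nth_append)
    finally have "Q2 ! 0 \<in> set Q" using short by simp
    moreover have "snd (Q2 ! 0) = Some s" using window(1,3) by simp
    ultimately show False using old unfolding tags_before_def by fastforce
  qed
  moreover have "length Q1 = length Q + length A - dA" using Q1(1) by simp
  ultimately show ?thesis using window_in_Q1 Q1(3) by arith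
qed

lemma block_passage:
  assumes run: "qrun w Q s M" and old: "tags_before Q s" and L: "0 < L"
    and len: "s + L + length md + L \<le> length w"
    and md: "drop (s + L) (take (s + L + length md) w) = md"
    and pops: "\<forall>k<L. (Some (s + k), s + L + length md + k) \<in> M"
  shows "\<exists>Q'. qrun w Q' (s + L + length md + L) {x \<in> M. s + L + length md + L \<le> snd x} \<and>
    tags_before Q' (s + L + length md + L) \<and> md \<in> shuffles (map fst Q) (map fst Q')"
proof -
  define s1 where "s1 = s + L"
  define s2 where "s2 = s1 + length md"
  define s3 where "s3 = s2 + L"
  have later: "{x \<in> {x \<in> M. a \<le> snd x}. b \<le> snd x} = {x \<in> M. b \<le> snd x}" if "a \<le> b" for a b
    using that by auto
  obtain Q1 where A: "qsteps w Q s Q1 s1 {x \<in> M. snd x < s1}"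
      and run1: "qrun w Q1 s1 {x \<in> M. s1 \<le> snd x}"
    using qrun_split[OF run, of s1] len unfolding s1_def by auto
  obtain Q2 where B: "qsteps w Q1 s1 Q2 s2 {x \<in> {x \<in> M. s1 \<le> snd x}. snd x < s2}"
      and run2: "qrun w Q2 s2 {x \<in> M. s2 \<le> snd x}"
    using qrun_split[OF run1, of s2] later[of s1 s2] len unfolding s1_def s2_def by auto
  obtain Q3 where C: "qsteps w Q2 s2 Q3 s3 {x \<in> {x \<in> M. s2 \<le> snd x}. snd x < s3}"
      and run3: "qrun w Q3 s3 {x \<in> M. s3 \<le> snd x}"
    using qrun_split[OF run2, of s3] later[of s2 s3] len unfolding s1_def s2_def s3_def by auto
  have "\<forall>k<s3 - s2. (Some (s + k), s2 + k) \<in> {x \<in> {x \<in> M. s2 \<le> snd x}. snd x < s3}"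
    using pops unfolding s1_def s2_def s3_def by auto
  from qsteps_all_pops[OF C this] have
    window: "L \<le> length Q2" "\<forall>k<L. snd (Q2 ! k) = Some (s + k)" and Q3: "Q3 = drop L Q2"
    unfolding s3_def by auto
  obtain dA PA where PA: "set PA \<subseteq> {s..<s1}" "Q1 = drop dA (Q @ map (pushed w) PA)"
      "dA + length PA = L" "dA \<le> length Q + length PA"
    using qsteps_shuffle[OF A] unfolding s1_def by auto
  obtain dB PB where PB: "set PB \<subseteq> {s1..<s2}" "Q2 = drop dB (Q1 @ map (pushed w) PB)"
      "dB \<le> length Q1 + length PB"
      "drop s1 (take s2 w) \<in> shuffles (map fst (take dB (Q1 @ map (pushed w) PB))) (map ((!) w) PB)"
    using qsteps_shuffle[OF B] by auto
  have "\<forall>x\<in>set (map (pushed w) PB). \<exists>p. snd x = Some p \<and> s + L \<le> p"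
    using PB(1) unfolding s1_def by (auto simp: pushed_def)
  then have "dA = 0 \<and> dB = length Q"
    using PA(3,4) PB(3) by (intro popped_window_is_pushed_block[OF PA(2) _ _ PB(2) _ L window old]) auto
  then have "dA = 0" "dB = length Q" by auto
  then have Q1: "Q1 = Q @ map (pushed w) PA" and Q3: "Q3 = map (pushed w) PB"
    using PA(2,3) PB(2) Q3 by simp_all
  have "md \<in> shuffles (map fst Q) (map fst Q3)"
    using PB(4) md \<open>dB = length Q\<close> unfolding Q1 Q3 s1_def s2_def by (simp add: pushed_def comp_def)
  moreover have "tags_before Q3 s3"
    using PB(1) unfolding Q3 tags_before_def pushed_def s3_def by auto
  ultimately show ?thesis using run3 unfolding s1_def s2_def s3_def by auto
qed

lemma mid_at_round:
  assumes "1 \<le> k"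
  shows "mid ns m B (4*k-3) = Dw ns m k" "mid ns m B (4*k-2) = Dw ns m k"
    "mid ns m B (4*k-1) = Ew ns m B k" "mid ns m B (4*k) = Fw m B k"
proof -
  obtain k' where k: "k = Suc k'" using assms by (cases k) auto
  show "mid ns m B (4*k-3) = Dw ns m k" "mid ns m B (4*k-2) = Dw ns m k"
    "mid ns m B (4*k-1) = Ew ns m B k" "mid ns m B (4*k) = Fw m B k"
    unfolding mid_def Let_def k by (simp_all add: mod_Suc)
qed

lemma Ver_eq_concat_blk: "Ver ns m B = concat (map (blk ns m B) [1..<12*m+1])"
proof -
  have "concat (map (\<lambda>k.
       v (4*k-3) @ Dw ns m k @ v (4*k-3) @ v (4*k-2) @ Dw ns m k @ v (4*k-2) @
       v (4*k-1) @ Ew ns m B k @ v (4*k-1) @ v (4*k) @ Fw m B k @ v (4*k)) [1..<n+1])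
    = concat (map (blk ns m B) [1..<4*n+1])" for n
  proof (induction n)
    case (Suc n)
    have "[1..<4 * Suc n + 1] = [1..<4*n+1] @ [4*n+1..<4*n+1+4]"
      using upt_add_eq_append[of 1 "4*n+1" 4] by simp
    also have "[4*n+1..<4*n+1+4] = [4*Suc n - 3, 4*Suc n - 2, 4*Suc n - 1, 4*Suc n]"
      by (simp add: upt_conv_Cons)
    finally show ?case
      using Suc mid_at_round[of "Suc n" ns m B] by (simp add: blk_def)
  qed simp
  from this[of "3*m"] show ?thesis by (simp add: Ver_def)
qed

lemma Ver_split_at_blk:
  assumes "1 \<le> l" "l \<le> 12*m"
  shows "Ver ns m B = concat (map (blk ns m B) [1..<l]) @ blk ns m B l @
    concat (map (blk ns m B) [Suc l..<12*m+1])"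
proof -
  have "[1..<12*m+1] = [1..<l] @ [l..<12*m+1]"
    using upt_add_eq_append[of 1 l "12*m+1-l"] assms by simp
  moreover have "[l..<12*m+1] = l # [Suc l..<12*m+1]" using assms by (simp add: upt_conv_Cons)
  ultimately show ?thesis unfolding Ver_eq_concat_blk by simp
qed

lemma voff_Suc: "1 \<le> l \<Longrightarrow> voff ns m B (Suc l) = voff ns m B l + length (blk ns m B l)"
  unfolding voff_def by simp

definition queue_at :: "nat list \<Rightarrow> nat \<Rightarrow> nat \<Rightarrow> (nat option \<times> nat) set \<Rightarrow> nat
    \<Rightarrow> (sym \<times> nat option) list \<Rightarrow> bool" where
  "queue_at ns m B M l Q \<longleftrightarrow>
    qrun (Ver ns m B) Q (voff ns m B l) {x \<in> M. voff ns m B l \<le> snd x} \<and> tags_before Q (voff ns m B l)"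

lemma queue_at_Suc:
  assumes V: "V_condition ns m B M" and Q: "queue_at ns m B M l Q" and l: "1 \<le> l" "l \<le> 12*m"
  shows "\<exists>Q'. queue_at ns m B M (Suc l) Q' \<and> mid ns m B l \<in> shuffles (map fst Q) (map fst Q')"
proof -
  define s where "s = voff ns m B l"
  define L where "L = length (v l)"
  define md where "md = mid ns m B l"
  define pre where "pre = concat (map (blk ns m B) [1..<l])"
  have w: "Ver ns m B = (pre @ v l) @ md @ (v l @ concat (map (blk ns m B) [Suc l..<12*m+1]))"
    unfolding pre_def md_def using Ver_split_at_blk[OF l, of ns B] by (simp add: blk_def)
  have pre: "length pre = s" unfolding pre_def s_def voff_def by simp
  have "0 < L" unfolding L_def by (simp add: v_def)
  moreover have "s + L + length md + L \<le> length (Ver ns m B)" using w pre unfolding L_def by simp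
  moreover have "drop (s + L) (take (s + L + length md) (Ver ns m B)) = md"
    unfolding w using pre L_def by simp
  moreover have "\<forall>k<L. (Some (s + k), s + L + length md + k) \<in> {x \<in> M. s \<le> snd x}"
    using V l unfolding V_condition_def s_def L_def md_def by auto
  moreover have "voff ns m B (Suc l) = s + L + length md + L"
    unfolding voff_Suc[OF l(1)] s_def L_def md_def by (simp add: blk_def)
  moreover have "{x \<in> {x \<in> M. s \<le> snd x}. s + L + length md + L \<le> snd x} =
      {x \<in> M. s + L + length md + L \<le> snd x}"
    by auto
  ultimately show ?thesis
    using block_passage[of "Ver ns m B" Q s "{x \<in> M. s \<le> snd x}" L md] Q
    unfolding queue_at_def s_def md_def by auto
qed

section \<open>From the queue contents to a 3-partition\<close>

lemma round_removes_nk: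
  assumes inst: "is_3part_instance ns m B" and V: "V_condition ns m B M"
    and k: "1 \<le> k" "k \<le> 3*m"
    and Q: "queue_at ns m B M (4*k-3) Q" "map fst Q = bricks ps" "length ps = 3*m - k + 1"
  shows "\<exists>ps1 ps2 Q'. ps = ps1 @ nn ns k # ps2 \<and> queue_at ns m B M (4*k+1) Q' \<and>
    map fst Q' = bricks (ps1 @ ps2)"
proof -
  define n where "n = nn ns k"
  have "n \<in> set ns" using k inst unfolding n_def nn_def is_3part_instance_def by simp
  then have "0 < n" using inst unfolding is_3part_instance_def by auto
  have l: "1 \<le> 4*k-3" "4*k-3 \<le> 12*m" "4*k-2 \<le> 12*m" "4*k-1 \<le> 12*m" "4*k \<le> 12*m"
    and l_Suc: "Suc (4*k-3) = 4*k-2" "Suc (4*k-2) = 4*k-1" "Suc (4*k-1) = 4*k" using k by auto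
  obtain Q2 where Q2: "queue_at ns m B M (4*k-2) Q2"
      "pw (U n) (length ps) \<in> shuffles (bricks ps) (map fst Q2)"
    using queue_at_Suc[OF V Q(1)] l l_Suc mid_at_round[OF k(1)] Q(2,3)
    unfolding Dw_def n_def by fastforce
  from pw_U_in_shuffles_bricks[OF Q2(2)] have small: "\<forall>p\<in>set ps. p \<le> n"
    and Q2_bricks: "map fst Q2 = bricks (map (\<lambda>p. n - p) ps)" by auto
  obtain Q3 where Q3: "queue_at ns m B M (4*k-1) Q3"
      "pw (U n) (length (map (\<lambda>p. n - p) ps)) \<in> shuffles (bricks (map (\<lambda>p. n - p) ps)) (map fst Q3)"
    using queue_at_Suc[OF V Q2(1)] l l_Suc mid_at_round[OF k(1)] Q(3) Q2_bricks
    unfolding Dw_def n_def by fastforce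
  have "map (\<lambda>p. n - p) (map (\<lambda>p. n - p) ps) = ps" using small by (induction ps) auto
  then have Q3_bricks: "map fst Q3 = bricks ps" using pw_U_in_shuffles_bricks[OF Q3(2)] by simp
  obtain Q4 where Q4: "queue_at ns m B M (4*k) Q4"
      "pw (U B) (3*m-k) @ brick n @ pw (U B) (3*m-k) \<in> shuffles (bricks ps) (map fst Q4)"
    using queue_at_Suc[OF V Q3(1)] l l_Suc mid_at_round[OF k(1)] Q3_bricks
    unfolding Ew_def n_def brick_def by fastforce
  obtain Q5 where Q5: "queue_at ns m B M (4*k+1) Q5" "pw (U B) (2*(3*m-k)) \<in> shuffles (map fst Q4) (map fst Q5)"
    using queue_at_Suc[OF V Q4(1)] l mid_at_round[OF k(1)] unfolding Fw_def by fastforce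
  obtain xs ys where "bricks ps = xs @ brick n @ ys" "map fst Q5 = xs @ ys"
    using E_F_blocks_cut_brick[OF \<open>0 < n\<close> small Q4(2) Q5(2)] by blast
  moreover from this(1) obtain ps1 ps2 where "ps = ps1 @ n # ps2" "xs = bricks ps1" "ys = bricks ps2"
    using bricks_eq_brick_infix by blast
  ultimately show ?thesis using Q5(1) unfolding n_def by auto
qed

lemma drop_pred_eq_Cons: "1 \<le> k \<Longrightarrow> k \<le> length xs \<Longrightarrow> drop (k - 1) xs = xs ! (k - 1) # drop k xs"
  using Cons_nth_drop_Suc[of "k - 1" xs] by simp

lemma queue_mset_eq_remaining:
  assumes inst: "is_3part_instance ns m B" and V: "V_condition ns m B M"
    and k: "1 \<le> k" "k \<le> 3*m"
    and Q: "queue_at ns m B M (4*k-3) Q" "map fst Q = bricks ps" "length ps = 3*m - k + 1"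
  shows "mset ps = mset (drop (k - 1) ns)"
  using k Q
proof (induction "3*m - k" arbitrary: k Q ps)
  case 0
  obtain ps1 ps2 Q' where ps: "ps = ps1 @ nn ns k # ps2"
    using round_removes_nk[OF inst V 0(2-6)] by blast
  moreover have "drop (k - 1) ns = [nn ns k]"
    using inst 0 drop_pred_eq_Cons[of k ns] unfolding is_3part_instance_def nn_def by simp
  ultimately show ?case using 0 by simp
next
  case (Suc d)
  obtain ps1 ps2 Q' where ps: "ps = ps1 @ nn ns k # ps2" and
    Q': "queue_at ns m B M (4*(k+1)-3) Q'" "map fst Q' = bricks (ps1 @ ps2)"
    using round_removes_nk[OF inst V Suc(3-7)] by auto
  have "mset (ps1 @ ps2) = mset (drop k ns)"
    using Suc.hyps(1)[of "k+1" Q' "ps1 @ ps2"] Suc.hyps(2) Suc.prems(5) Q' ps by simp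
  moreover have "drop (k - 1) ns = nn ns k # drop k ns"
    using inst Suc drop_pred_eq_Cons[of k ns] unfolding is_3part_instance_def nn_def by simp
  ultimately show ?case using ps by simp
qed

lemma permutes_preimage_div3:
  fixes p :: "nat \<Rightarrow> nat"
  assumes p: "p permutes {..<3*m}" and j: "j < m"
  shows "{i. i < 3*m \<and> inv p i div 3 = j} = p ` {3*j, 3*j+1, 3*j+2}"
proof (intro set_eqI iffI)
  fix i assume "i \<in> {i. i < 3*m \<and> inv p i div 3 = j}"
  then have "inv p i \<in> {3*j, 3*j+1, 3*j+2}" by auto
  moreover have "i = p (inv p i)" using permutes_inverses(1)[OF p] by simp
  ultimately show "i \<in> p ` {3*j, 3*j+1, 3*j+2}" by blast
next
  fix i assume "i \<in> p ` {3*j, 3*j+1, 3*j+2}"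
  then obtain a where a: "a \<in> {3*j, 3*j+1, 3*j+2}" "i = p a" by blast
  then have "a < 3*m" using j by auto
  then have "i < 3*m" using a permutes_in_image[OF p] by simp
  moreover have "inv p i = a" using a permutes_inverses(2)[OF p] by simp
  ultimately show "i \<in> {i. i < 3*m \<and> inv p i div 3 = j}" using a by auto
qed

lemma is_yes_3part_if_mset_eq:
  assumes len: "length ns = 3*m"
    and perm: "mset (map ik [1..<3*m+1]) = mset ns"
    and triples: "\<forall>j. 1 \<le> j \<and> j \<le> m \<longrightarrow> ik (3*j-2) + ik (3*j-1) + ik (3*j) = B"
  shows "is_yes_3part ns m B"
proof -
  obtain p where p: "p permutes {..<3*m}" "permute_list p ns = map ik [1..<3*m+1]"
    using mset_eq_permutation[OF perm] len by metis
  have ns_p: "ns ! p a = ik (Suc a)" if "a < 3*m" for a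
  proof -
    have "permute_list p ns ! a = ns ! p a" using permute_list_nth[OF p(1)[folded len]] that len by simp
    moreover have "map ik [1..<3*m+1] ! a = ik (Suc a)" using that by (simp del: upt_Suc)
    ultimately show ?thesis using p(2) by simp
  qed
  define f where "f i = inv p i div 3" for i
  have group: "{i. i < 3*m \<and> f i = j} = p ` {3*j, 3*j+1, 3*j+2}" if "j < m" for j
    unfolding f_def using permutes_preimage_div3[OF p(1) that] .
  have inj: "inj_on p A" for A using permutes_inj_on[OF p(1)] .
  show ?thesis
    unfolding is_yes_3part_def
  proof (intro exI[of _ f] conjI allI impI)
    fix i assume "i < 3*m"
    then have "inv p i < 3*m" using permutes_in_image[OF permutes_inv[OF p(1)]] by simp
    then show "f i < m" unfolding f_def by simp
  next
    fix j assume j: "j < m"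
    show "card {i. i < 3*m \<and> f i = j} = 3"
      unfolding group[OF j] card_image[OF inj] by simp
    have "(\<Sum>i | i < 3*m \<and> f i = j. ns ! i) = (\<Sum>a\<in>{3*j, 3*j+1, 3*j+2}. ns ! p a)"
      unfolding group[OF j] using sum.reindex[OF inj, of "\<lambda>i. ns ! i"] by (simp only: comp_def)
    also have "\<dots> = ik (3*Suc j - 2) + ik (3*Suc j - 1) + ik (3*Suc j)"
      using ns_p j by (simp add: eval_nat_numeral)
    also have "\<dots> = B" using triples j by (metis Suc_leI le_add1 plus_1_eq_Suc)
    finally show "(\<Sum>i | i < 3*m \<and> f i = j. ns ! i) = B" .
  qed
qed

theorem lemma8:
  fixes ns :: "nat list" and m B :: nat and ik :: "nat \<Rightarrow> nat"
    and M :: "(nat option \<times> nat) set"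
  assumes "is_3part_instance ns m B"
    and "sorted_wrt (\<ge>) ns"
    and "\<forall>j. 1 \<le> j \<and> j \<le> m \<longrightarrow> ik (3*j-2) + ik (3*j-1) + ik (3*j) = B"
    and "qrun (Ver ns m B) (map (\<lambda>s. (s, None)) (Wq m ik)) 0 M"
    and "V_condition ns m B M"
  shows "is_yes_3part ns m B"
proof -
  have m: "0 < m" and len: "length ns = 3*m" using assms(1) unfolding is_3part_instance_def by auto
  define Q where "Q = map (\<lambda>s. (s, None :: nat option)) (Wq m ik)"
  have start: "queue_at ns m B M (4*1-3) Q"
    using assms(4) unfolding queue_at_def Q_def by (simp add: voff_def tags_before_def)
  have "map fst Q = bricks (map ik [1..<3*m+1])"
    unfolding Q_def by (simp add: Wq_def bricks_def brick_def comp_def del: upt_Suc)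
  then have "mset (map ik [1..<3*m+1]) = mset (drop (1 - 1) ns)"
    using m by (intro queue_mset_eq_remaining[OF assms(1,5) _ _ start]) auto
  then show ?thesis using is_yes_3part_if_mset_eq[OF len _ assms(3)] by simp
qed

end
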